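(* Every element $h\in S\mathcal V_G$ can be written as $h=f_2^{-1}\,t\,f_1$ for some multicolored forests $f_1,f_2$ and some $G$-twist $t$ (of $\mathfrak C^S(k)$, where $k$ is the common rank of $f_1$ and $f_2$). Moreover, for such a decomposition, $h\in S\mathcal V$ if and only if $t$ is the identity.
   Context: Let $\mathfrak C=\{0,1\}^{\omega}$, $S$ a nonempty set, $G$ a subgroup of the symmetric group of $S$, and $\mathfrak C^S$ the space of functions $S\to\mathfrak C$. For $\psi\colon S\to\{0,1\}^*$ with $\psi(s)=\varnothing$ for all but finitely many $s$, the dyadic brick $B(\psi)$ is the set of $\kappa\in\mathfrak C^S$ with $\psi(s)$ a prefix of $\kappa(s)$ for all $s$; $\Phi_\psi(\kappa)(s)=\psi(s)\cdot\kappa(s)$ is the canonical homeomorphism $\mathfrak C^S\to B(\psi)$; for $\gamma\in G$, $\tau_\gamma(\kappa)(s)=\kappa(\gamma^{-1}s)$, and the twist homeomorphism $B(\varphi)\to B(\psi)$ associated to $\gamma$ is $\Phi_\psi\tau_\gamma\Phi_\varphi^{-1}$. For $m\ge1$, let $\mathfrak C^S(m)=\mathfrak C^S_1\sqcup\dots\sqcup\mathfrak C^S_m$ be a disjoint union of $m$ copies of $\mathfrak C^S$, with $\mathfrak C^S(1)=\mathfrak C^S$. A dyadic brick in $\mathfrak C^S(m)$ is a dyadic brick in one of the cubes; canonical and twist homeomorphisms between bricks in possibly different cubes are defined via the identifications of each cube with $\mathfrak C^S$. $S\mathcal V_G$ is the set of homeomorphisms $h\colon\mathfrak C^S(m)\to\mathfrak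 C^S(n)$ ($m,n\ge1$) for which there are partitions of $\mathfrak C^S(m)$ and $\mathfrak C^S(n)$ into the same number of dyadic bricks $B_i$, $B_i'$ and $\gamma_i\in G$ such that $h$ maps each $B_i$ to $B_i'$ by the twist homeomorphism associated to $\gamma_i$; $S\mathcal V$ is the subset where all $\gamma_i$ may be taken trivial. The number $n$ is the rank of $h$ and $m$ its corank. The direct sum of $h\colon\mathfrak C^S(m)\to\mathfrak C^S(n)$ and $h'\colon\mathfrak C^S(m')\to\mathfrak C^S(n')$ is $h\oplus h'\colon\mathfrak C^S(m+m')\to\mathfrak C^S(n+n')$, acting as $h$ from the first $m$ cubes to the first $n$ cubes and as $h'$ from the remaining $m'$ cubes to the remaining $n'$ cubes. A $G$-twist of $\mathfrak C^S(n)$ is a map $\tau_{\gamma_1}\oplus\dots\oplus\tau_{\gamma_n}$ with $\gamma_i\in G$. A very elementary expansion of a partition $\mathcal P$ of $\mathfrak C^S(m)$ into dyadic bricks is a partition $\mathcal P'$ into dyadic bricks such that every brick of $\mathcal P$ is a union of at most two bricks of $\mathcal P'$; a dyadic partition of $\mathfrak C^S(m)$ is one obtained from $\{\mathfrak C^S_1,\dots,\mathfrak C^S_m\}$ by finitely many very elementary expansions. A multicolored forest is a homeomorphism $f\colon\mathfrak C^S(m)\to\mathfrak C^S(n)$ that maps the bricks $B_1,\dots,B_n$ of some dyadic partition of $\mathfrak C^S(m)$ onto $\mathfrak C^S_1,\dots,\mathfrak C^S_n$ respectively by canonical homeomorphisms. *)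

theory Defs
  imports "HOL-Analysis.Analysis"
begin

text \<open>Cantor space \<open>\<CC> = {0,1}^\<omega>\<close> is \<open>nat \<Rightarrow> bool\<close> (product topology of the discrete
  space \<open>bool\<close>).  The index set \<open>S\<close> is the (nonempty) type \<open>'s\<close>; \<open>\<CC>^S\<close> is
  \<open>'s \<Rightarrow> nat \<Rightarrow> bool\<close> with the product topology.  The disjoint union
  \<open>\<CC>^S(m)\<close> of \<open>m\<close> cubes is the subspace \<open>{0..<m} \<times> UNIV\<close> of \<open>nat \<times> ('s \<Rightarrow> nat \<Rightarrow> bool)\<close>;
  the cube with index \<open>j\<close> (0-based) is \<open>{j} \<times> UNIV\<close>.\<close>

type_synonym cantor = "nat \<Rightarrow> bool"
type_synonym 's cube_pt = "nat \<times> ('s \<Rightarrow> cantor)"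

definition cubes :: "nat \<Rightarrow> 's cube_pt set" where
  "cubes m = {0..<m} \<times> UNIV"

definition perm_subgroup :: "('s \<Rightarrow> 's) set \<Rightarrow> bool" where
  "perm_subgroup G \<longleftrightarrow> (\<forall>g\<in>G. bij g) \<and> id \<in> G \<and>
     (\<forall>g\<in>G. \<forall>h\<in>G. g \<circ> h \<in> G) \<and> (\<forall>g\<in>G. inv g \<in> G)"

definition is_prefix :: "bool list \<Rightarrow> cantor \<Rightarrow> bool" where
  "is_prefix w x \<longleftrightarrow> (\<forall>i<length w. x i = w ! i)"

definition concat_seq :: "bool list \<Rightarrow> cantor \<Rightarrow> cantor" where
  "concat_seq w x = (\<lambda>i. if i < length w then w ! i else x (i - length w))"

definition fin_supp :: "('s \<Rightarrow> bool list) \<Rightarrow> bool" where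
  "fin_supp \<psi> \<longleftrightarrow> finite {s. \<psi> s \<noteq> []}"

definition brick :: "('s \<Rightarrow> bool list) \<Rightarrow> ('s \<Rightarrow> cantor) set" where
  "brick \<psi> = {\<kappa>. \<forall>s. is_prefix (\<psi> s) (\<kappa> s)}"

definition Phi :: "('s \<Rightarrow> bool list) \<Rightarrow> ('s \<Rightarrow> cantor) \<Rightarrow> ('s \<Rightarrow> cantor)" where
  "Phi \<psi> \<kappa> = (\<lambda>s. concat_seq (\<psi> s) (\<kappa> s))"

definition Phi_inv :: "('s \<Rightarrow> bool list) \<Rightarrow> ('s \<Rightarrow> cantor) \<Rightarrow> ('s \<Rightarrow> cantor)" where
  "Phi_inv \<psi> \<kappa> = (\<lambda>s i. \<kappa> s (i + length (\<psi> s)))"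

definition tau :: "('s \<Rightarrow> 's) \<Rightarrow> ('s \<Rightarrow> cantor) \<Rightarrow> ('s \<Rightarrow> cantor)" where
  "tau \<gamma> \<kappa> = (\<lambda>s. \<kappa> (inv \<gamma> s))"

text \<open>A dyadic brick of \<CC>^S(m) is described by a cube index j and a finitely
  supported \<psi>; its point set:\<close>
definition brick_in :: "nat \<times> ('s \<Rightarrow> bool list) \<Rightarrow> 's cube_pt set" where
  "brick_in b = {fst b} \<times> brick (snd b)"

definition valid_brick :: "nat \<Rightarrow> nat \<times> ('s \<Rightarrow> bool list) \<Rightarrow> bool" where
  "valid_brick m b \<longleftrightarrow> fst b < m \<and> fin_supp (snd b)"

definition twist_map :: "nat \<times> ('s \<Rightarrow> bool list) \<Rightarrow> nat \<times> ('s \<Rightarrow> bool list) \<Rightarrow> ('s \<Rightarrow> 's)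
    \<Rightarrow> 's cube_pt \<Rightarrow> 's cube_pt" where
  "twist_map b b' \<gamma> x = (fst b', Phi (snd b') (tau \<gamma> (Phi_inv (snd b) (snd x))))"

definition canon_map :: "nat \<times> ('s \<Rightarrow> bool list) \<Rightarrow> nat \<times> ('s \<Rightarrow> bool list)
    \<Rightarrow> 's cube_pt \<Rightarrow> 's cube_pt" where
  "canon_map b b' x = (fst b', Phi (snd b') (Phi_inv (snd b) (snd x)))"

definition brick_partition :: "nat \<Rightarrow> (nat \<times> ('s \<Rightarrow> bool list)) list \<Rightarrow> bool" where
  "brick_partition m P \<longleftrightarrow> (\<forall>b\<in>set P. valid_brick m b) \<and>
     (\<forall>i<length P. \<forall>j<length P. i \<noteq> j \<longrightarrow> brick_in (P ! i) \<inter> brick_in (P ! j) = {}) \<and>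
     (\<Union>b\<in>set P. brick_in b) = cubes m"

text \<open>h \<in> S\<V>_G with corank m and rank n\<close>
definition SV_G :: "('s \<Rightarrow> 's) set \<Rightarrow> nat \<Rightarrow> nat \<Rightarrow> ('s cube_pt \<Rightarrow> 's cube_pt) \<Rightarrow> bool" where
  "SV_G G m n h \<longleftrightarrow> m \<ge> 1 \<and> n \<ge> 1 \<and>
     homeomorphic_map (top_of_set (cubes m)) (top_of_set (cubes n)) h \<and>
     (\<exists>P Q \<gamma>s. brick_partition m P \<and> brick_partition n Q \<and>
        length Q = length P \<and> length \<gamma>s = length P \<and> set \<gamma>s \<subseteq> G \<and>
        (\<forall>i<length P. \<forall>x\<in>brick_in (P ! i). h x = twist_map (P ! i) (Q ! i) (\<gamma>s ! i) x))"

definition SV :: "nat \<Rightarrow> nat \<Rightarrow> ('s cube_pt \<Rightarrow> 's cube_pt) \<Rightarrow> bool" where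
  "SV m n h \<longleftrightarrow> SV_G {id} m n h"

definition is_brick_set :: "nat \<Rightarrow> 's cube_pt set \<Rightarrow> bool" where
  "is_brick_set m B \<longleftrightarrow> (\<exists>b. valid_brick m b \<and> B = brick_in b)"

definition brick_set_partition :: "nat \<Rightarrow> 's cube_pt set set \<Rightarrow> bool" where
  "brick_set_partition m \<P> \<longleftrightarrow> finite \<P> \<and> (\<forall>B\<in>\<P>. is_brick_set m B) \<and>
     (\<forall>B\<in>\<P>. \<forall>B'\<in>\<P>. B \<noteq> B' \<longrightarrow> B \<inter> B' = {}) \<and> \<Union>\<P> = cubes m"

definition very_elementary_expansion :: "nat \<Rightarrow> 's cube_pt set set \<Rightarrow> 's cube_pt set set \<Rightarrow> bool" where
  "very_elementary_expansion m \<P> \<P>' \<longleftrightarrow> brick_set_partition m \<P>' \<and>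
     (\<forall>B\<in>\<P>. \<exists>\<X>\<subseteq>\<P>'. card \<X> \<le> 2 \<and> \<Union>\<X> = B)"

inductive dyadic_partition :: "nat \<Rightarrow> 's cube_pt set set \<Rightarrow> bool" for m where
  base: "dyadic_partition m ((\<lambda>j. {j} \<times> UNIV) ` {0..<m})"
| step: "dyadic_partition m \<P> \<Longrightarrow> very_elementary_expansion m \<P> \<P>' \<Longrightarrow> dyadic_partition m \<P>'"

definition multicolored_forest :: "nat \<Rightarrow> nat \<Rightarrow> ('s cube_pt \<Rightarrow> 's cube_pt) \<Rightarrow> bool" where
  "multicolored_forest m n f \<longleftrightarrow> m \<ge> 1 \<and> n \<ge> 1 \<and>
     homeomorphic_map (top_of_set (cubes m)) (top_of_set (cubes n)) f \<and>
     (\<exists>L. length L = n \<and> (\<forall>b\<in>set L. valid_brick m b) \<and>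
        inj_on brick_in (set L) \<and> distinct L \<and>
        dyadic_partition m (brick_in ` set L) \<and>
        (\<forall>i<n. \<forall>x\<in>brick_in (L ! i). f x = canon_map (L ! i) (i, \<lambda>s. []) x))"

definition G_twist :: "('s \<Rightarrow> 's) set \<Rightarrow> nat \<Rightarrow> ('s cube_pt \<Rightarrow> 's cube_pt) \<Rightarrow> bool" where
  "G_twist G n t \<longleftrightarrow> (\<exists>\<gamma>s. length \<gamma>s = n \<and> set \<gamma>s \<subseteq> G \<and>
     (\<forall>x\<in>cubes n. t x = (fst x, tau (\<gamma>s ! fst x) (snd x))))"

end

theory Submission
  imports Defs
begin

text \<open>Work at a uniform depth. Choose a word length exceeding all words of the bricks \<open>P\<^sub>a\<close>,
  \<open>Q\<^sub>a\<close> of \<open>h\<close> on the finitely many coordinates involved. The partition of the source into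
  all bricks of that uniform length is dyadic and refines the \<open>P\<^sub>a\<close>; lengthening its words inside
  each \<open>P\<^sub>a\<close>, so that the twist \<open>\<gamma>\<^sub>a\<close> carries every piece onto a brick of a uniform length
  in the target, keeps it dyadic, because lengthening words never leaves the dyadic partitions.
  Enumerating these pieces and their images gives the forests \<open>f\<^sub>1\<close>, \<open>f\<^sub>2\<close>, and \<open>t\<close> twists by
  the \<open>\<gamma>\<^sub>a\<close> used. Conversely, for \<open>h \<in> S\<V>\<close> coordinate \<open>s\<close> of \<open>h x\<close> locally depends only on
  coordinate \<open>s\<close> of \<open>x\<close>, which forces every twist in such a decomposition to be trivial.\<close>

lemma is_prefix_append:
  "is_prefix (w @ v) x \<longleftrightarrow> is_prefix w x \<and> is_prefix v (\<lambda>i. x (i + length w))"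
proof
  assume a: "is_prefix (w @ v) x"
  show "is_prefix w x \<and> is_prefix v (\<lambda>i. x (i + length w))"
  proof
    show "is_prefix w x"
      using a by (auto simp: is_prefix_def nth_append)
    show "is_prefix v (\<lambda>i. x (i + length w))"
      unfolding is_prefix_def
    proof (intro allI impI)
      fix i assume "i < length v"
      then show "x (i + length w) = v ! i"
        using a[unfolded is_prefix_def, rule_format, of "i + length w"] by (simp add: nth_append)
    qed
  qed
next
  assume a: "is_prefix w x \<and> is_prefix v (\<lambda>i. x (i + length w))"
  show "is_prefix (w @ v) x"
    unfolding is_prefix_def
  proof (intro allI impI)
    fix i assume i: "i < length (w @ v)"
    show "x i = (w @ v) ! i"
    proof (cases "i < length w")
      case True
      then show ?thesis using a by (simp add: is_prefix_def nth_append)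
    next
      case False
      then have "i - length w < length v" using i by simp
      then have "x (i - length w + length w) = v ! (i - length w)"
        using a unfolding is_prefix_def by blast
      then show ?thesis using False by (simp add: nth_append)
    qed
  qed
qed

lemma is_prefix_concat_seq [simp]: "is_prefix w (concat_seq w y)"
  by (simp add: is_prefix_def concat_seq_def)

lemma concat_seq_shift [simp]: "(\<lambda>i. concat_seq w y (i + length w)) = y"
  by (simp add: concat_seq_def)

lemma concat_seq_prefix_shift: "is_prefix w x \<Longrightarrow> concat_seq w (\<lambda>i. x (i + length w)) = x"
  by (auto simp: is_prefix_def concat_seq_def fun_eq_iff)

lemma concat_seq_append: "concat_seq (w @ v) y = concat_seq w (concat_seq v y)"
  by (auto simp: concat_seq_def fun_eq_iff nth_append)

lemma is_prefix_drop: "is_prefix w x \<Longrightarrow> is_prefix (drop k w) (\<lambda>i. x (i + k))"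
  by (auto simp: is_prefix_def add.commute)

lemma is_prefix_take: "is_prefix w x \<Longrightarrow> is_prefix (take k w) x"
  by (auto simp: is_prefix_def)

lemma is_prefix_unique: "is_prefix w x \<Longrightarrow> is_prefix w' x \<Longrightarrow> length w = length w' \<Longrightarrow> w = w'"
  by (auto simp: is_prefix_def intro: nth_equalityI)

lemma is_prefix_map_upt: "is_prefix (map x [0..<k]) x"
  by (simp add: is_prefix_def)

lemma is_prefix_take_longer:
  "is_prefix w x \<Longrightarrow> is_prefix v x \<Longrightarrow> length w \<le> length v \<Longrightarrow> take (length w) v = w"
  by (auto simp: is_prefix_def intro!: nth_equalityI)

lemma is_prefix_fun_upd: "is_prefix w x \<Longrightarrow> length w \<le> p \<Longrightarrow> is_prefix w (x(p := c))"
  by (auto simp: is_prefix_def)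

lemma Phi_in_brick: "Phi \<psi> \<kappa> \<in> brick \<psi>"
  by (simp add: brick_def Phi_def)

lemma Phi_in_brick_in: "(fst b, Phi (snd b) \<kappa>) \<in> brick_in b"
  by (simp add: brick_in_def Phi_in_brick)

lemma Phi_Phi_inv: "\<kappa> \<in> brick \<psi> \<Longrightarrow> Phi \<psi> (Phi_inv \<psi> \<kappa>) = \<kappa>"
  unfolding Phi_def Phi_inv_def brick_def by (auto simp: concat_seq_prefix_shift)

lemma Phi_inv_Phi [simp]: "Phi_inv \<psi> (Phi \<psi> \<kappa>) = \<kappa>"
  unfolding Phi_def Phi_inv_def by simp

lemma Phi_Nil [simp]: "Phi (\<lambda>_. []) \<kappa> = \<kappa>"
  by (simp add: Phi_def concat_seq_def)

lemma brick_length_le: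
  assumes "brick \<psi> = brick \<phi>"
  shows "length (\<phi> s) \<le> length (\<psi> s)"
proof (rule ccontr)
  assume "\<not> length (\<phi> s) \<le> length (\<psi> s)"
  have "is_prefix (\<phi> s) (concat_seq (\<psi> s) (\<lambda>_. b))" for b
    using Phi_in_brick[of \<psi> "\<lambda>_ _. b"] unfolding assms by (simp add: brick_def Phi_def)
  then have "concat_seq (\<psi> s) (\<lambda>_. b) (length (\<psi> s)) = \<phi> s ! length (\<psi> s)" for b
    using \<open>\<not> length (\<phi> s) \<le> length (\<psi> s)\<close> unfolding is_prefix_def by simp
  from this[of True] this[of False] show False by (simp add: concat_seq_def)
qed

lemma brick_inj:
  assumes "brick \<psi> = brick \<phi>"
  shows "\<psi> = \<phi>"
proof
  fix s
  have "length (\<phi> s) = length (\<psi> s)"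
    using brick_length_le[OF assms] brick_length_le[OF assms[symmetric]] by (simp add: le_antisym)
  moreover have "is_prefix (\<phi> s) (concat_seq (\<psi> s) (\<lambda>_. False))"
    using Phi_in_brick[of \<psi> "\<lambda>_ _. False"] unfolding assms by (simp add: brick_def Phi_def)
  ultimately show "\<psi> s = \<phi> s"
    using is_prefix_unique[of "\<psi> s" "concat_seq (\<psi> s) (\<lambda>_. False)" "\<phi> s"] by simp
qed

lemma brick_in_inj:
  assumes "brick_in b = brick_in b'"
  shows "b = b'"
proof -
  have "(fst b, Phi (snd b) (\<lambda>_ _. False)) \<in> brick_in b'"
    using Phi_in_brick_in[of b] unfolding assms .
  then have "fst b = fst b'" by (simp add: brick_in_def)
  with assms have "brick (snd b) = brick (snd b')"
    unfolding brick_in_def by (auto simp: set_eq_iff)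
  then show ?thesis using \<open>fst b = fst b'\<close> brick_inj by (simp add: prod_eq_iff)
qed

lemma brick_in_nonempty: "brick_in b \<noteq> {}"
  using Phi_in_brick_in by blast

lemma brick_mono: "(\<And>s. take (length (\<psi> s)) (\<sigma> s) = \<psi> s) \<Longrightarrow> brick \<sigma> \<subseteq> brick \<psi>"
  unfolding brick_def by (auto, metis is_prefix_take)

lemma brick_split: "brick (\<sigma>(s := \<sigma> s @ [False])) \<union> brick (\<sigma>(s := \<sigma> s @ [True])) = brick \<sigma>"
proof (intro subset_antisym Un_least subsetI)
  fix \<kappa> assume "\<kappa> \<in> brick \<sigma>"
  then have "is_prefix (\<sigma> s @ [\<kappa> s (length (\<sigma> s))]) (\<kappa> s)"
    by (simp add: brick_def is_prefix_append) (simp add: is_prefix_def)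
  then have "\<kappa> \<in> brick (\<sigma>(s := \<sigma> s @ [\<kappa> s (length (\<sigma> s))]))"
    using \<open>\<kappa> \<in> brick \<sigma>\<close> by (simp add: brick_def)
  then show "\<kappa> \<in> brick (\<sigma>(s := \<sigma> s @ [False])) \<union> brick (\<sigma>(s := \<sigma> s @ [True]))"
    by (cases "\<kappa> s (length (\<sigma> s))") simp_all
qed (erule brick_mono[THEN subsetD, rotated], simp)+

lemma brick_in_subset_cubes: "valid_brick m b \<Longrightarrow> brick_in b \<subseteq> cubes m"
  by (auto simp: brick_in_def cubes_def valid_brick_def)

lemma continuous_on_coordinate: "continuous_on S (\<lambda>\<kappa> :: 's \<Rightarrow> cantor. \<kappa> s i)"
proof -
  have "continuous_on S (\<lambda>\<kappa> :: 's \<Rightarrow> cantor. \<kappa> s)"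
    by (rule continuous_on_subset[OF continuous_on_product_coordinates]) simp
  then show ?thesis by (rule continuous_on_product_then_coordinatewise)
qed

lemma continuous_on_Phi: "continuous_on S (Phi \<psi>)"
proof (intro continuous_on_coordinatewise_then_product)
  fix s i
  show "continuous_on S (\<lambda>\<kappa>. Phi \<psi> \<kappa> s i)"
    by (cases "i < length (\<psi> s)") (simp_all add: Phi_def concat_seq_def continuous_on_coordinate)
qed

lemma continuous_on_Phi_inv: "continuous_on S (Phi_inv \<psi>)"
  by (intro continuous_on_coordinatewise_then_product) (simp add: Phi_inv_def continuous_on_coordinate)

lemma open_brick:
  assumes "fin_supp \<psi>"
  shows "open (brick \<psi>)"
proof -
  have eq: "brick \<psi> =
      (\<Inter>s\<in>{s. \<psi> s \<noteq> []}. \<Inter>i\<in>{..<length (\<psi> s)}. (\<lambda>\<kappa>. \<kappa> s i) -` {\<psi> s ! i})"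
    unfolding brick_def is_prefix_def by auto
  show ?thesis
    unfolding eq using assms unfolding fin_supp_def
    by (intro open_INT) (auto intro!: open_vimage continuous_on_coordinate simp: open_discrete)
qed

lemma open_brick_in: "valid_brick m b \<Longrightarrow> open (brick_in b)"
  unfolding brick_in_def valid_brick_def by (intro open_Times open_brick) (auto simp: open_discrete)

lemma brick_in_base: "{j} \<times> UNIV = brick_in (j, \<lambda>_. [])"
  by (simp add: brick_in_def brick_def is_prefix_def)

lemma brick_set_partition_base:
  "brick_set_partition m ((\<lambda>j. {j} \<times> (UNIV :: ('s \<Rightarrow> cantor) set)) ` {0..<m})"
  unfolding brick_set_partition_def
proof (intro conjI ballI impI)
  fix B assume "B \<in> (\<lambda>j. {j} \<times> (UNIV :: ('s \<Rightarrow> cantor) set)) ` {0..<m}"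
  then obtain j where "j < m" "B = brick_in (j, \<lambda>_. [])"
    using brick_in_base by fastforce
  then show "is_brick_set m B"
    unfolding is_brick_set_def valid_brick_def fin_supp_def by force
qed (auto simp: cubes_def)

lemma brick_set_partition_if_dyadic: "dyadic_partition m \<P> \<Longrightarrow> brick_set_partition m \<P>"
  by (induction rule: dyadic_partition.induct)
     (auto simp: brick_set_partition_base very_elementary_expansion_def)

lemma finite_words_of_lengths:
  assumes "finite {s. l s \<noteq> 0}"
  shows "finite {\<sigma> :: 's \<Rightarrow> bool list. \<forall>s. length (\<sigma> s) = l s}"
proof -
  let ?K = "{s. l s \<noteq> 0}"
  let ?W = "PiE ?K (\<lambda>s. {w :: bool list. length w = l s})"
  have "finite {w :: bool list. length w = n}" for n
    using finite_lists_length_eq[of "UNIV :: bool set" n] by simp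
  then have "finite ?W"
    using assms by (intro finite_PiE) simp_all
  moreover have "{\<sigma>. \<forall>s. length (\<sigma> s) = l s} \<subseteq> (\<lambda>f s. if s \<in> ?K then f s else []) ` ?W"
  proof
    fix \<sigma> :: "'s \<Rightarrow> bool list" assume "\<sigma> \<in> {\<sigma>. \<forall>s. length (\<sigma> s) = l s}"
    then have "restrict \<sigma> ?K \<in> ?W" and "\<sigma> = (\<lambda>s. if s \<in> ?K then restrict \<sigma> ?K s else [])"
      by (auto simp: fun_eq_iff) (metis length_0_conv)
    then show "\<sigma> \<in> (\<lambda>f s. if s \<in> ?K then f s else []) ` ?W" by blast
  qed
  ultimately show ?thesis by (meson finite_imageI finite_subset)
qed

definition sub_bricks :: "nat \<times> ('s \<Rightarrow> bool list) \<Rightarrow> ('s \<Rightarrow> nat) \<Rightarrow> (nat \<times> ('s \<Rightarrow> bool list)) set" where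
  "sub_bricks b l = {(fst b, \<sigma>) | \<sigma>. \<forall>s. length (\<sigma> s) = l s \<and> take (length (snd b s)) (\<sigma> s) = snd b s}"

definition refine :: "(nat \<times> ('s \<Rightarrow> bool list)) set \<Rightarrow> (nat \<times> ('s \<Rightarrow> bool list) \<Rightarrow> 's \<Rightarrow> nat)
    \<Rightarrow> (nat \<times> ('s \<Rightarrow> bool list)) set" where
  "refine T L = (\<Union>b\<in>T. sub_bricks b (L b))"

lemma sub_bricksI:
  "(\<And>s. length (\<sigma> s) = l s) \<Longrightarrow> (\<And>s. take (length (snd b s)) (\<sigma> s) = snd b s) \<Longrightarrow> (fst b, \<sigma>) \<in> sub_bricks b l"
  unfolding sub_bricks_def by blast

lemma sub_bricksE:
  assumes "c \<in> sub_bricks b l"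
  obtains \<sigma> where "c = (fst b, \<sigma>)" "\<And>s. length (\<sigma> s) = l s" "\<And>s. take (length (snd b s)) (\<sigma> s) = snd b s"
  using assms unfolding sub_bricks_def by blast

lemma refineE:
  assumes "c \<in> refine T L"
  obtains b \<sigma> where "b \<in> T" "c = (fst b, \<sigma>)" "\<And>s. length (\<sigma> s) = L b s"
    "\<And>s. take (length (snd b s)) (\<sigma> s) = snd b s"
  using assms unfolding refine_def by (auto elim!: sub_bricksE)

lemma brick_in_sub_bricks_subset:
  assumes "c \<in> sub_bricks b l"
  shows "brick_in c \<subseteq> brick_in b"
  using assms
proof (elim sub_bricksE)
  fix \<sigma> assume "c = (fst b, \<sigma>)" "\<And>s. take (length (snd b s)) (\<sigma> s) = snd b s"
  then show ?thesis using brick_mono[of "snd b" \<sigma>] by (auto simp: brick_in_def)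
qed

lemma sub_bricks_self:
  assumes "\<And>s. l s = length (snd b s)"
  shows "sub_bricks b l = {b}"
proof -
  have "(\<forall>s. length (\<sigma> s) = l s \<and> take (length (snd b s)) (\<sigma> s) = snd b s) \<longleftrightarrow> \<sigma> = snd b" for \<sigma>
    using assms by (auto simp: fun_eq_iff) (metis take_all order_refl)
  then show ?thesis
    unfolding sub_bricks_def by auto
qed

locale refinement =
  fixes m :: nat and T :: "(nat \<times> ('s \<Rightarrow> bool list)) set" and K :: "'s set"
    and L :: "nat \<times> ('s \<Rightarrow> bool list) \<Rightarrow> 's \<Rightarrow> nat"
  assumes finite_T: "finite T" and valid_T: "\<And>b. b \<in> T \<Longrightarrow> valid_brick m b" and finite_K: "finite K"
    and length_le: "\<And>b s. b \<in> T \<Longrightarrow> length (snd b s) \<le> L b s"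
    and length_outside: "\<And>b s. b \<in> T \<Longrightarrow> s \<notin> K \<Longrightarrow> L b s = length (snd b s)"
begin

lemma finite_lengths: "b \<in> T \<Longrightarrow> finite {s. L b s \<noteq> 0}"
proof -
  assume b: "b \<in> T"
  have "{s. L b s \<noteq> 0} \<subseteq> K \<union> {s. snd b s \<noteq> []}"
    using length_outside[OF b] by auto
  moreover have "finite {s. snd b s \<noteq> []}"
    using valid_T[OF b] by (simp add: valid_brick_def fin_supp_def)
  ultimately show ?thesis using finite_K by (meson finite_Un finite_subset)
qed

lemma valid_refine: "c \<in> refine T L \<Longrightarrow> valid_brick m c"
proof (elim refineE)
  fix b \<sigma> assume b: "b \<in> T" "c = (fst b, \<sigma>)" "\<And>s. length (\<sigma> s) = L b s"
  have "{s. \<sigma> s \<noteq> []} \<subseteq> {s. L b s \<noteq> 0}"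
    by (auto simp: b(3)[symmetric])
  then have "fin_supp \<sigma>"
    unfolding fin_supp_def using finite_lengths[OF b(1)] by (rule finite_subset)
  then show ?thesis using b valid_T by (simp add: valid_brick_def)
qed

lemma finite_refine: "finite (refine T L)"
  unfolding refine_def
proof (intro finite_UN_I finite_T)
  fix b assume b: "b \<in> T"
  have "sub_bricks b (L b) \<subseteq> {fst b} \<times> {\<sigma>. \<forall>s. length (\<sigma> s) = L b s}"
    by (auto elim: sub_bricksE)
  then show "finite (sub_bricks b (L b))"
    using finite_words_of_lengths[OF finite_lengths[OF b]] by (meson finite_SigmaI finite.insertI
        finite.emptyI finite_subset)
qed

lemma refine_disjoint:
  assumes part: "brick_set_partition m (brick_in ` T)"
    and c: "c \<in> refine T L" "c' \<in> refine T L" "brick_in c \<inter> brick_in c' \<noteq> {}"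
  shows "c = c'"
proof -
  obtain b \<sigma> where b: "b \<in> T" "c = (fst b, \<sigma>)" "\<And>s. length (\<sigma> s) = L b s"
      "\<And>s. take (length (snd b s)) (\<sigma> s) = snd b s"
    using c(1) by (elim refineE) blast
  obtain b' \<sigma>' where b': "b' \<in> T" "c' = (fst b', \<sigma>')" "\<And>s. length (\<sigma>' s) = L b' s"
      "\<And>s. take (length (snd b' s)) (\<sigma>' s) = snd b' s"
    using c(2) by (elim refineE) blast
  obtain x where x: "x \<in> brick_in c" "x \<in> brick_in c'" using c(3) by blast
  have "brick_in c \<subseteq> brick_in b" "brick_in c' \<subseteq> brick_in b'"
    using b b' by (auto intro!: brick_in_sub_bricks_subset sub_bricksI)
  then have "brick_in b \<inter> brick_in b' \<noteq> {}" using x by blast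
  then have "brick_in b = brick_in b'"
    using part b(1) b'(1) unfolding brick_set_partition_def by (meson imageI)
  then have "b = b'" by (rule brick_in_inj)
  moreover have "\<sigma> = \<sigma>'"
  proof (rule ext, rule is_prefix_unique)
    fix s
    show "is_prefix (\<sigma> s) (snd x s)" "is_prefix (\<sigma>' s) (snd x s)"
      using x b(2) b'(2) unfolding brick_in_def brick_def by auto
    show "length (\<sigma> s) = length (\<sigma>' s)" using b(3) b'(3) \<open>b = b'\<close> by simp
  qed
  ultimately show ?thesis using b(2) b'(2) by simp
qed

lemma refine_covers:
  assumes part: "brick_set_partition m (brick_in ` T)" and x: "x \<in> cubes m"
  shows "x \<in> \<Union> (brick_in ` refine T L)"
proof -
  have "x \<in> \<Union> (brick_in ` T)"
    using part x by (simp add: brick_set_partition_def)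
  then obtain b where b: "b \<in> T" "x \<in> brick_in b" by blast
  then have x_b: "fst x = fst b" "\<And>s. is_prefix (snd b s) (snd x s)"
    unfolding brick_in_def brick_def by auto
  define \<sigma> where "\<sigma> = (\<lambda>s. map (snd x s) [0..<L b s])"
  have "(fst b, \<sigma>) \<in> sub_bricks b (L b)"
  proof (rule sub_bricksI)
    fix s
    show "length (\<sigma> s) = L b s" by (simp add: \<sigma>_def)
    show "take (length (snd b s)) (\<sigma> s) = snd b s"
      unfolding \<sigma>_def using is_prefix_take_longer[OF x_b(2) is_prefix_map_upt] length_le[OF b(1)]
      by simp
  qed
  then have "(fst b, \<sigma>) \<in> refine T L"
    using b(1) unfolding refine_def by blast
  moreover have "x \<in> brick_in (fst b, \<sigma>)"
    using x_b(1) unfolding brick_in_def brick_def \<sigma>_def by (simp add: is_prefix_map_upt mem_Times_iff)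
  ultimately show ?thesis by blast
qed

lemma brick_set_partition_refine:
  assumes "brick_set_partition m (brick_in ` T)"
  shows "brick_set_partition m (brick_in ` refine T L)"
  unfolding brick_set_partition_def
proof (intro conjI ballI impI)
  show "finite (brick_in ` refine T L)" using finite_refine by simp
  show "\<Union> (brick_in ` refine T L) = cubes m"
    using refine_covers[OF assms] valid_refine brick_in_subset_cubes by blast
next
  fix B assume "B \<in> brick_in ` refine T L"
  then show "is_brick_set m B" using valid_refine unfolding is_brick_set_def by blast
next
  fix B B' assume "B \<in> brick_in ` refine T L" "B' \<in> brick_in ` refine T L" "B \<noteq> B'"
  then show "B \<inter> B' = {}" using refine_disjoint[OF assms] by blast
qed

lemma refinement_shorten:
  assumes "b0 \<in> T" "length (snd b0 s0) < L b0 s0"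
  shows "refinement m T K (L(b0 := (L b0)(s0 := L b0 s0 - 1)))"
proof
  fix b s assume "b \<in> T"
  then show "length (snd b s) \<le> (L(b0 := (L b0)(s0 := L b0 s0 - 1))) b s"
    using length_le[of b s] assms(2) by auto
  show "s \<notin> K \<Longrightarrow> (L(b0 := (L b0)(s0 := L b0 s0 - 1))) b s = length (snd b s)"
    using length_outside[OF \<open>b \<in> T\<close>, of s] length_outside[OF assms(1), of s] assms(2) by auto
qed (use finite_T valid_T finite_K in auto)

text \<open>Shortening one word of the refinement by a letter merges pairs of its bricks, so the
  refinement is a very elementary expansion of the shortened one.\<close>

lemma very_elementary_expansion_shorten:
  assumes part: "brick_set_partition m (brick_in ` T)"
    and b0: "b0 \<in> T" "length (snd b0 s0) < L b0 s0"
  shows "very_elementary_expansion m (brick_in ` refine T (L(b0 := (L b0)(s0 := L b0 s0 - 1))))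
    (brick_in ` refine T L)"
  unfolding very_elementary_expansion_def
proof (intro conjI ballI)
  show "brick_set_partition m (brick_in ` refine T L)"
    by (rule brick_set_partition_refine[OF part])
next
  define L' where "L' = L(b0 := (L b0)(s0 := L b0 s0 - 1))"
  fix B assume "B \<in> brick_in ` refine T L'"
  then obtain b \<sigma> where b: "b \<in> T" "B = brick_in (fst b, \<sigma>)" "\<And>s. length (\<sigma> s) = L' b s"
    "\<And>s. take (length (snd b s)) (\<sigma> s) = snd b s"
    by (auto elim!: refineE)
  show "\<exists>\<X>\<subseteq>brick_in ` refine T L. card \<X> \<le> 2 \<and> \<Union> \<X> = B"
  proof (cases "b = b0")
    case False
    then have "(fst b, \<sigma>) \<in> sub_bricks b (L b)"
      using b(3,4) unfolding L'_def by (intro sub_bricksI) auto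
    then have "(fst b, \<sigma>) \<in> refine T L"
      using b(1) unfolding refine_def by blast
    then show ?thesis using b(2) by (intro exI[of _ "{B}"]) auto
  next
    case True
    define half where "half = (\<lambda>x. (fst b0, \<sigma>(s0 := \<sigma> s0 @ [x])))"
    have "half x \<in> sub_bricks b0 (L b0)" for x
      unfolding half_def
    proof (rule sub_bricksI)
      fix s
      show "length ((\<sigma>(s0 := \<sigma> s0 @ [x])) s) = L b0 s"
        using b(3)[of s] b0(2) True unfolding L'_def by auto
      show "take (length (snd b0 s)) ((\<sigma>(s0 := \<sigma> s0 @ [x])) s) = snd b0 s"
        using b(3,4)[of s] b0(2) True unfolding L'_def by auto
    qed
    then have "{brick_in (half False), brick_in (half True)} \<subseteq> brick_in ` refine T L"
      using b0(1) unfolding refine_def by blast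
    moreover have "brick_in (half False) \<union> brick_in (half True) = B"
      using brick_split[of \<sigma> s0] b(2) True unfolding half_def brick_in_def by auto
    moreover have "card {brick_in (half False), brick_in (half True)} \<le> 2"
      by (simp add: card_insert_if)
    ultimately show ?thesis by (intro exI[of _ "{brick_in (half False), brick_in (half True)}"]) auto
  qed
qed

end

definition refinement_excess :: "(nat \<times> ('s \<Rightarrow> bool list)) set \<Rightarrow> 's set
    \<Rightarrow> (nat \<times> ('s \<Rightarrow> bool list) \<Rightarrow> 's \<Rightarrow> nat) \<Rightarrow> nat" where
  "refinement_excess T K L = (\<Sum>b\<in>T. \<Sum>s\<in>K. L b s - length (snd b s))"

lemma refinement_excess_shorten:
  assumes T: "finite T" "b0 \<in> T" and K: "finite K" "s0 \<in> K" and gt: "length (snd b0 s0) < L b0 s0"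
  shows "refinement_excess T K (L(b0 := (L b0)(s0 := L b0 s0 - 1))) < refinement_excess T K L"
  unfolding refinement_excess_def
proof (rule sum_strict_mono_ex1[OF T(1)])
  let ?L' = "L(b0 := (L b0)(s0 := L b0 s0 - 1))"
  show "\<forall>b\<in>T. (\<Sum>s\<in>K. ?L' b s - length (snd b s)) \<le> (\<Sum>s\<in>K. L b s - length (snd b s))"
    by (auto intro!: sum_mono)
  have "(\<Sum>s\<in>K. ?L' b0 s - length (snd b0 s)) < (\<Sum>s\<in>K. L b0 s - length (snd b0 s))"
    using K gt by (intro sum_strict_mono_ex1 bexI[of _ s0]) auto
  then show "\<exists>b\<in>T. (\<Sum>s\<in>K. ?L' b s - length (snd b s)) < (\<Sum>s\<in>K. L b s - length (snd b s))"
    using T(2) by blast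
qed

lemma dyadic_partition_refine:
  assumes "refinement m T K L" and dyadic: "dyadic_partition m (brick_in ` T)"
  shows "dyadic_partition m (brick_in ` refine T L)"
  using assms(1)
proof (induction "refinement_excess T K L" arbitrary: L rule: less_induct)
  case (less L)
  interpret refinement m T K L by (rule less.prems)
  show ?case
  proof (cases "\<forall>b\<in>T. \<forall>s\<in>K. L b s = length (snd b s)")
    case True
    have "sub_bricks b (L b) = {b}" if "b \<in> T" for b
      using True length_outside[OF that] that by (intro sub_bricks_self) metis
    then have "refine T L = T"
      by (auto simp: refine_def)
    then show ?thesis using dyadic by simp
  next
    case False
    then obtain b0 s0 where b0: "b0 \<in> T" "s0 \<in> K" "L b0 s0 \<noteq> length (snd b0 s0)"
      by blast
    then have gt: "length (snd b0 s0) < L b0 s0"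
      using length_le[OF b0(1), of s0] by simp
    have "dyadic_partition m (brick_in ` refine T (L(b0 := (L b0)(s0 := L b0 s0 - 1))))"
      using less.hyps[OF refinement_excess_shorten[where L = L, OF finite_T b0(1) finite_K b0(2) gt]]
        refinement_shorten[OF b0(1) gt] by blast
    then show ?thesis
      using very_elementary_expansion_shorten[OF brick_set_partition_if_dyadic[OF dyadic] b0(1) gt]
      by (rule dyadic_partition.step)
  qed
qed

definition level_bricks :: "nat \<Rightarrow> ('s \<Rightarrow> nat) \<Rightarrow> (nat \<times> ('s \<Rightarrow> bool list)) set" where
  "level_bricks m l = {(j, \<sigma>). j < m \<and> (\<forall>s. length (\<sigma> s) = l s)}"

lemma level_bricks_eq_refine:
  "level_bricks m l = refine ((\<lambda>j. (j, \<lambda>_. [])) ` {..<m}) (\<lambda>_. l)"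
  unfolding level_bricks_def refine_def sub_bricks_def by auto

lemma refinement_level_bricks:
  assumes "finite {s. l s \<noteq> 0}"
  shows "refinement m ((\<lambda>j. (j, \<lambda>_. [])) ` {..<m}) {s. l s \<noteq> 0} (\<lambda>_. l)"
  using assms by unfold_locales (auto simp: valid_brick_def fin_supp_def)

lemma level_bricks:
  assumes "finite {s. l s \<noteq> 0}"
  shows "dyadic_partition m (brick_in ` level_bricks m l)"
    and "finite (level_bricks m l)" and "\<And>b. b \<in> level_bricks m l \<Longrightarrow> valid_brick m b"
proof -
  interpret refinement m "(\<lambda>j. (j, \<lambda>_. [])) ` {..<m}" "{s. l s \<noteq> 0}" "\<lambda>_. l"
    by (rule refinement_level_bricks[OF assms])
  have "brick_in ` (\<lambda>j. (j, \<lambda>_. [])) ` {..<m} = (\<lambda>j. {j} \<times> UNIV) ` {0..<m}"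
    by (auto simp: brick_in_base image_image)
  then have "dyadic_partition m (brick_in ` (\<lambda>j. (j, \<lambda>_. [])) ` {..<m})"
    by (metis dyadic_partition.base)
  then show "dyadic_partition m (brick_in ` level_bricks m l)"
    unfolding level_bricks_eq_refine
    by (rule dyadic_partition_refine[OF refinement_level_bricks[OF assms]])
  show "finite (level_bricks m l)" "\<And>b. b \<in> level_bricks m l \<Longrightarrow> valid_brick m b"
    unfolding level_bricks_eq_refine by (simp_all add: finite_refine valid_refine)
qed

definition brick_index :: "(nat \<times> ('s \<Rightarrow> bool list)) list \<Rightarrow> 's cube_pt \<Rightarrow> nat" where
  "brick_index L x = (SOME i. i < length L \<and> x \<in> brick_in (L ! i))"

definition forest_map :: "(nat \<times> ('s \<Rightarrow> bool list)) list \<Rightarrow> 's cube_pt \<Rightarrow> 's cube_pt" where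
  "forest_map L x = (brick_index L x, Phi_inv (snd (L ! brick_index L x)) (snd x))"

definition forest_map_inv :: "(nat \<times> ('s \<Rightarrow> bool list)) list \<Rightarrow> 's cube_pt \<Rightarrow> 's cube_pt" where
  "forest_map_inv L y = (fst (L ! fst y), Phi (snd (L ! fst y)) (snd y))"

locale brick_list =
  fixes m :: nat and L :: "(nat \<times> ('s \<Rightarrow> bool list)) list"
  assumes partition: "brick_set_partition m (brick_in ` set L)"
    and valid: "\<And>b. b \<in> set L \<Longrightarrow> valid_brick m b" and distinct: "distinct L"
begin

lemma brick_index_unique:
  assumes "i < length L" "j < length L" "x \<in> brick_in (L ! i)" "x \<in> brick_in (L ! j)"
  shows "i = j"
proof (rule ccontr)
  assume "i \<noteq> j"
  then have "brick_in (L ! i) \<noteq> brick_in (L ! j)"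
    using distinct assms(1,2) brick_in_inj by (metis nth_eq_iff_index_eq)
  then have "brick_in (L ! i) \<inter> brick_in (L ! j) = {}"
    using partition assms(1,2) unfolding brick_set_partition_def by (meson imageI nth_mem)
  then show False using assms(3,4) by blast
qed

lemma brick_index_exists:
  assumes "x \<in> cubes m"
  obtains i where "i < length L" "x \<in> brick_in (L ! i)"
proof -
  have "x \<in> \<Union> (brick_in ` set L)"
    using partition assms by (simp add: brick_set_partition_def)
  then show ?thesis using that by (auto simp: in_set_conv_nth)
qed

lemma brick_partition: "brick_partition m L"
  unfolding brick_partition_def
  using valid brick_index_unique partition by (auto simp: brick_set_partition_def)

lemma brick_in_subset_cubes: "i < length L \<Longrightarrow> brick_in (L ! i) \<subseteq> cubes m"
  using valid brick_in_subset_cubes by (meson nth_mem)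

lemma forest_map_eq:
  assumes "i < length L" "x \<in> brick_in (L ! i)"
  shows "forest_map L x = (i, Phi_inv (snd (L ! i)) (snd x))"
proof -
  have "brick_index L x = i"
    unfolding brick_index_def
    by (rule some_equality) (auto intro: brick_index_unique[OF _ assms(1) _ assms(2)] simp: assms)
  then show ?thesis by (simp add: forest_map_def)
qed

lemma forest_map_inverse: "x \<in> cubes m \<Longrightarrow> forest_map_inv L (forest_map L x) = x"
  by (erule brick_index_exists)
     (auto simp: forest_map_eq forest_map_inv_def brick_in_def Phi_Phi_inv prod_eq_iff)

lemma forest_map_inv_inverse: "y \<in> cubes (length L) \<Longrightarrow> forest_map L (forest_map_inv L y) = y"
  using Phi_in_brick_in[of "L ! fst y"]
  by (auto simp: cubes_def forest_map_eq forest_map_inv_def)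

lemma forest_map_in_cubes: "x \<in> cubes m \<Longrightarrow> forest_map L x \<in> cubes (length L)"
  by (erule brick_index_exists) (simp add: forest_map_eq cubes_def)

lemma forest_map_inv_in_cubes: "y \<in> cubes (length L) \<Longrightarrow> forest_map_inv L y \<in> cubes m"
  using valid[OF nth_mem, of "fst y"] by (auto simp: cubes_def forest_map_inv_def valid_brick_def)

lemma continuous_on_forest_map: "continuous_on (cubes m) (forest_map L)"
proof -
  have "cubes m = \<Union> (brick_in ` set L)"
    using partition by (simp add: brick_set_partition_def)
  also have "set L = (\<lambda>i. L ! i) ` {..<length L}"
    by (metis atLeast0LessThan list.set_map map_nth set_upt)
  finally have "cubes m = \<Union> ((\<lambda>i. brick_in (L ! i)) ` {..<length L})"
    by (simp add: image_image)
  moreover have "continuous_on (brick_in (L ! i)) (forest_map L)" if "i < length L" for i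
  proof -
    have "continuous_on (brick_in (L ! i)) (\<lambda>x. (i, Phi_inv (snd (L ! i)) (snd x)))"
      by (intro continuous_on_Pair continuous_on_const
          continuous_on_compose2[OF continuous_on_Phi_inv continuous_on_snd[OF continuous_on_id]]) auto
    then show ?thesis
      by (rule continuous_on_cong[THEN iffD1, rotated 2]) (use that forest_map_eq in auto)
  qed
  ultimately show ?thesis
    by (auto intro!: continuous_on_open_Union open_brick_in valid)
qed

lemma continuous_on_forest_map_inv: "continuous_on (cubes (length L)) (forest_map_inv L)"
proof -
  have "cubes (length L) = \<Union> ((\<lambda>i. {i} \<times> (UNIV :: ('s \<Rightarrow> cantor) set)) ` {..<length L})"
    by (auto simp: cubes_def)
  moreover have "continuous_on ({i} \<times> UNIV) (forest_map_inv L)" for i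
  proof -
    have "continuous_on ({i} \<times> UNIV) (\<lambda>y. (fst (L ! i), Phi (snd (L ! i)) (snd y)))"
      by (intro continuous_on_Pair continuous_on_const
          continuous_on_compose2[OF continuous_on_Phi continuous_on_snd[OF continuous_on_id]]) auto
    then show ?thesis
      by (rule continuous_on_cong[THEN iffD1, rotated 2]) (auto simp: forest_map_inv_def)
  qed
  ultimately show ?thesis
    by (auto intro!: continuous_on_open_Union open_Times simp: open_discrete)
qed

lemma homeomorphic_map_forest_map:
  "homeomorphic_map (top_of_set (cubes m)) (top_of_set (cubes (length L))) (forest_map L)"
  unfolding homeomorphic_map_maps homeomorphic_maps_def
  by (intro exI[of _ "forest_map_inv L"] conjI)
     (auto simp: continuous_on_forest_map continuous_on_forest_map_inv forest_map_in_cubes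
       forest_map_inv_in_cubes forest_map_inverse forest_map_inv_inverse)

lemma multicolored_forest_forest_map:
  assumes "dyadic_partition m (brick_in ` set L)" "m \<ge> 1" "length L \<ge> 1"
  shows "multicolored_forest m (length L) (forest_map L)"
  unfolding multicolored_forest_def
  using assms homeomorphic_map_forest_map valid distinct
  by (intro conjI exI[of _ L]) (auto intro: inj_onI brick_in_inj simp: forest_map_eq canon_map_def)

lemma inv_into_forest_map:
  assumes "\<And>x. x \<in> cubes m \<Longrightarrow> f x = forest_map L x" "inj_on f (cubes m)" "y \<in> cubes (length L)"
  shows "inv_into (cubes m) f y = forest_map_inv L y"
  using assms forest_map_inv_in_cubes forest_map_inv_inverse by (intro inv_into_f_eq) auto

end

lemma multicolored_forestE:
  assumes "multicolored_forest m k f"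
  obtains L where "brick_list m L" "length L = k" "\<And>x. x \<in> cubes m \<Longrightarrow> f x = forest_map L x"
    "inj_on f (cubes m)"
proof -
  obtain L where L: "length L = k" "\<And>b. b \<in> set L \<Longrightarrow> valid_brick m b" "distinct L"
    "dyadic_partition m (brick_in ` set L)"
    "\<And>i x. i < k \<Longrightarrow> x \<in> brick_in (L ! i) \<Longrightarrow> f x = canon_map (L ! i) (i, \<lambda>s. []) x"
    and hom: "homeomorphic_map (top_of_set (cubes m)) (top_of_set (cubes k)) f"
    using assms unfolding multicolored_forest_def by blast
  interpret brick_list m L
    using L brick_set_partition_if_dyadic by unfold_locales auto
  have "f x = forest_map L x" if "x \<in> cubes m" for x
    using that by (rule brick_index_exists) (use L in \<open>auto simp: forest_map_eq canon_map_def\<close>)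
  moreover have "inj_on f (cubes m)"
    using homeomorphic_imp_injective_map[OF hom] by simp
  ultimately show thesis using that L(1) brick_list_axioms by blast
qed

definition twist_word :: "nat \<times> ('s \<Rightarrow> bool list) \<Rightarrow> nat \<times> ('s \<Rightarrow> bool list) \<Rightarrow> ('s \<Rightarrow> 's)
    \<Rightarrow> ('s \<Rightarrow> bool list) \<Rightarrow> ('s \<Rightarrow> bool list)" where
  "twist_word b b' \<gamma> \<sigma> = (\<lambda>s. snd b' s @ drop (length (snd b (inv \<gamma> s))) (\<sigma> (inv \<gamma> s)))"

lemma twist_map_sub_brick:
  assumes sub: "\<And>u. take (length (snd b u)) (\<sigma> u) = snd b u" and \<kappa>: "\<kappa> \<in> brick \<sigma>"
  shows "twist_map b b' \<gamma> (j, \<kappa>) = twist_map (j, \<sigma>) (fst b', twist_word b b' \<gamma> \<sigma>) \<gamma> (j, \<kappa>)"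
proof -
  have "Phi (snd b') (tau \<gamma> (Phi_inv (snd b) \<kappa>)) s =
      Phi (twist_word b b' \<gamma> \<sigma>) (tau \<gamma> (Phi_inv \<sigma> \<kappa>)) s" for s
  proof -
    define u where "u = inv \<gamma> s"
    have "length (take (length (snd b u)) (\<sigma> u)) = length (snd b u)"
      using sub by simp
    then have le: "length (snd b u) \<le> length (\<sigma> u)"
      by (simp add: min_def split: if_splits)
    define y where "y = (\<lambda>i. \<kappa> u (i + length (snd b u)))"
    have "is_prefix (drop (length (snd b u)) (\<sigma> u)) y"
      unfolding y_def using \<kappa> by (intro is_prefix_drop) (simp add: brick_def)
    then have "concat_seq (drop (length (snd b u)) (\<sigma> u))
        (\<lambda>i. y (i + length (drop (length (snd b u)) (\<sigma> u)))) = y"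
      by (rule concat_seq_prefix_shift)
    moreover have "(\<lambda>i. y (i + length (drop (length (snd b u)) (\<sigma> u)))) = (\<lambda>i. \<kappa> u (i + length (\<sigma> u)))"
      unfolding y_def using le by simp
    ultimately have "concat_seq (drop (length (snd b u)) (\<sigma> u)) (\<lambda>i. \<kappa> u (i + length (\<sigma> u))) = y"
      by simp
    then show ?thesis
      unfolding Phi_def tau_def Phi_inv_def twist_word_def u_def[symmetric]
      by (simp add: concat_seq_append y_def)
  qed
  then show ?thesis unfolding twist_map_def by auto
qed

lemma twist_map_image:
  assumes bij: "bij \<gamma>" and sub: "\<And>u. take (length (snd b u)) (\<sigma> u) = snd b u"
  shows "twist_map b b' \<gamma> ` brick_in (j, \<sigma>) = brick_in (fst b', twist_word b b' \<gamma> \<sigma>)"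
proof
  show "twist_map b b' \<gamma> ` brick_in (j, \<sigma>) \<subseteq> brick_in (fst b', twist_word b b' \<gamma> \<sigma>)"
  proof (rule image_subsetI)
    fix x assume "x \<in> brick_in (j, \<sigma>)"
    then obtain \<kappa> where "x = (j, \<kappa>)" "\<kappa> \<in> brick \<sigma>" by (auto simp: brick_in_def)
    then show "twist_map b b' \<gamma> x \<in> brick_in (fst b', twist_word b b' \<gamma> \<sigma>)"
      using twist_map_sub_brick[OF sub, of \<kappa> b' \<gamma> j]
        by (simp add: twist_map_def brick_in_def Phi_in_brick)
  qed
next
  show "brick_in (fst b', twist_word b b' \<gamma> \<sigma>) \<subseteq> twist_map b b' \<gamma> ` brick_in (j, \<sigma>)"
  proof
    fix y assume y: "y \<in> brick_in (fst b', twist_word b b' \<gamma> \<sigma>)"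
    define \<kappa> where "\<kappa> = Phi \<sigma> (\<lambda>u. Phi_inv (twist_word b b' \<gamma> \<sigma>) (snd y) (\<gamma> u))"
    have \<kappa>: "\<kappa> \<in> brick \<sigma>" unfolding \<kappa>_def by (rule Phi_in_brick)
    have "tau \<gamma> (Phi_inv \<sigma> \<kappa>) = Phi_inv (twist_word b b' \<gamma> \<sigma>) (snd y)"
      unfolding \<kappa>_def using bij by (simp add: tau_def fun_eq_iff surj_f_inv_f bij_is_surj)
    then have "twist_map b b' \<gamma> (j, \<kappa>) = y"
      using y twist_map_sub_brick[OF sub \<kappa>] by (auto simp: twist_map_def brick_in_def Phi_Phi_inv)
    then show "y \<in> twist_map b b' \<gamma> ` brick_in (j, \<sigma>)"
      using \<kappa> by (force simp: brick_in_def)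
  qed
qed

definition twist_cubes :: "('s \<Rightarrow> 's) list \<Rightarrow> 's cube_pt \<Rightarrow> 's cube_pt" where
  "twist_cubes \<gamma>s x = (fst x, tau (\<gamma>s ! fst x) (snd x))"

lemma twist_cubes_in_cubes: "x \<in> cubes k \<Longrightarrow> twist_cubes \<gamma>s x \<in> cubes k"
  by (simp add: twist_cubes_def cubes_def mem_Times_iff)

lemma G_twist_iff: "G_twist G k t \<longleftrightarrow>
    (\<exists>\<gamma>s. length \<gamma>s = k \<and> set \<gamma>s \<subseteq> G \<and> (\<forall>x\<in>cubes k. t x = twist_cubes \<gamma>s x))"
  by (simp add: G_twist_def twist_cubes_def)

lemma twist_cubes_trivial_iff:
  "(\<forall>x\<in>cubes (length \<gamma>s). twist_cubes \<gamma>s x = x) \<longleftrightarrow> (\<forall>i<length \<gamma>s. tau (\<gamma>s ! i) = id)"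
  by (auto simp: twist_cubes_def cubes_def fun_eq_iff)

lemma twist_map_eq_forest_maps:
  assumes "brick_list m L1" "i < length L1" "x \<in> brick_in (L1 ! i)"
  shows "twist_map (L1 ! i) (L2 ! i) (\<gamma>s ! i) x = forest_map_inv L2 (twist_cubes \<gamma>s (forest_map L1 x))"
  using brick_list.forest_map_eq[OF assms]
  by (simp add: twist_map_def forest_map_inv_def twist_cubes_def)

lemma forest_factorization_if_piecewise_twist:
  fixes L1 L2 :: "(nat \<times> ('s \<Rightarrow> bool list)) list" and h :: "'s cube_pt \<Rightarrow> 's cube_pt"
  assumes L1: "brick_list m L1" "dyadic_partition m (brick_in ` set L1)"
    and L2: "brick_list n L2" "dyadic_partition n (brick_in ` set L2)"
    and lengths: "length L2 = length L1" "length \<gamma>s = length L1" "length L1 \<ge> 1"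
    and pos: "m \<ge> 1" "n \<ge> 1" and \<gamma>s: "set \<gamma>s \<subseteq> G"
    and twist: "\<And>i x. i < length L1 \<Longrightarrow> x \<in> brick_in (L1 ! i) \<Longrightarrow>
      h x = twist_map (L1 ! i) (L2 ! i) (\<gamma>s ! i) x"
  shows "\<exists>f1 f2 t. multicolored_forest m (length L1) f1 \<and> multicolored_forest n (length L1) f2 \<and>
    G_twist G (length L1) t \<and> (\<forall>x\<in>cubes m. h x = inv_into (cubes n) f2 (t (f1 x)))"
proof (intro exI conjI ballI)
  show "multicolored_forest m (length L1) (forest_map L1)"
    using L1 pos lengths by (simp add: brick_list.multicolored_forest_forest_map)
  show "multicolored_forest n (length L1) (forest_map L2)"
    using L2 pos lengths brick_list.multicolored_forest_forest_map by fastforce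
  show "G_twist G (length L1) (twist_cubes \<gamma>s)"
    using lengths \<gamma>s by (auto simp: G_twist_iff)
  fix x :: "'s cube_pt" assume "x \<in> cubes m"
  then obtain i where i: "i < length L1" "x \<in> brick_in (L1 ! i)"
    using brick_list.brick_index_exists[OF L1(1)] by blast
  have "twist_cubes \<gamma>s (forest_map L1 x) \<in> cubes (length L2)"
    using brick_list.forest_map_in_cubes[OF L1(1) \<open>x \<in> cubes m\<close>] lengths
    by (simp add: twist_cubes_in_cubes)
  moreover have "inj_on (forest_map L2) (cubes n)"
    using brick_list.forest_map_inverse[OF L2(1)] by (rule inj_on_inverseI)
  ultimately have "inv_into (cubes n) (forest_map L2) (twist_cubes \<gamma>s (forest_map L1 x))
      = forest_map_inv L2 (twist_cubes \<gamma>s (forest_map L1 x))"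
    by (intro brick_list.inv_into_forest_map[OF L2(1)]) auto
  then show "h x = inv_into (cubes n) (forest_map L2) (twist_cubes \<gamma>s (forest_map L1 x))"
    using twist[OF i] twist_map_eq_forest_maps[OF L1(1) i] by simp
qed

lemma piecewise_twist_if_forest_factorization:
  assumes f1: "multicolored_forest m k f1" and f2: "multicolored_forest n k f2"
    and t: "length \<gamma>s = k" "\<And>x. x \<in> cubes k \<Longrightarrow> t x = twist_cubes \<gamma>s x"
    and h: "\<And>x. x \<in> cubes m \<Longrightarrow> h x = inv_into (cubes n) f2 (t (f1 x))"
  obtains L1 L2 where "brick_list m L1" "brick_list n L2" "length L1 = k" "length L2 = k"
    "\<And>i x. i < k \<Longrightarrow> x \<in> brick_in (L1 ! i) \<Longrightarrow> h x = twist_map (L1 ! i) (L2 ! i) (\<gamma>s ! i) x"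
proof -
  obtain L1 where L1: "brick_list m L1" "length L1 = k" "\<And>x. x \<in> cubes m \<Longrightarrow> f1 x = forest_map L1 x"
    "inj_on f1 (cubes m)"
    using f1 by (elim multicolored_forestE) blast
  obtain L2 where L2: "brick_list n L2" "length L2 = k" "\<And>x. x \<in> cubes n \<Longrightarrow> f2 x = forest_map L2 x"
    "inj_on f2 (cubes n)"
    using f2 by (elim multicolored_forestE) blast
  have "h x = twist_map (L1 ! i) (L2 ! i) (\<gamma>s ! i) x" if i: "i < k" "x \<in> brick_in (L1 ! i)" for i x
  proof -
    have x: "x \<in> cubes m"
      using brick_list.brick_in_subset_cubes[OF L1(1)] i L1(2) by blast
    have "twist_cubes \<gamma>s (forest_map L1 x) \<in> cubes (length L2)"
      using brick_list.forest_map_in_cubes[OF L1(1) x] L1(2) L2(2) by (simp add: twist_cubes_in_cubes)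
    moreover have "t (f1 x) = twist_cubes \<gamma>s (forest_map L1 x)"
      using brick_list.forest_map_in_cubes[OF L1(1) x] L1 t(2) x by simp
    ultimately show ?thesis
      using h[OF x] brick_list.inv_into_forest_map[OF L2(1) L2(3) L2(4)]
        twist_map_eq_forest_maps[OF L1(1)] i L1(2) by simp
  qed
  with L1 L2 that show thesis by blast
qed

lemma SV_if_trivial_twists:
  assumes L1: "brick_list m L1" and L2: "brick_list n L2" and lengths: "length L2 = length L1"
    and h: "m \<ge> 1" "n \<ge> 1" "homeomorphic_map (top_of_set (cubes m)) (top_of_set (cubes n)) h"
    and twist: "\<And>i x. i < length L1 \<Longrightarrow> x \<in> brick_in (L1 ! i) \<Longrightarrow>
      h x = twist_map (L1 ! i) (L2 ! i) (\<gamma>s ! i) x"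
    and trivial: "\<And>i. i < length L1 \<Longrightarrow> tau (\<gamma>s ! i) = id"
  shows "SV m n h"
proof -
  have "h x = twist_map (L1 ! i) (L2 ! i) (replicate (length L1) id ! i) x"
    if "i < length L1" "x \<in> brick_in (L1 ! i)" for i x
    using twist[OF that] trivial[OF that(1)] that(1) by (simp add: twist_map_def tau_def)
  then show ?thesis
    unfolding SV_def SV_G_def
    using h lengths brick_list.brick_partition[OF L1] brick_list.brick_partition[OF L2]
    by (intro conjI exI[of _ L1] exI[of _ L2] exI[of _ "replicate (length L1) id"]) auto
qed

lemma brick_partition_cover:
  assumes "brick_partition m P" "x \<in> cubes m"
  obtains a where "a < length P" "x \<in> brick_in (P ! a)"
proof -
  have "x \<in> \<Union> (brick_in ` set P)"
    using assms unfolding brick_partition_def by simp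
  then show ?thesis using that by (auto simp: in_set_conv_nth)
qed

text \<open>If \<open>h \<in> S\<V>\<close>, coordinate \<open>s\<close> of \<open>h x\<close> depends, near any point, only on coordinate \<open>s\<close> of
  \<open>x\<close>. A twist moving \<open>u = \<gamma>\<^sup>-\<^sup>1 s \<noteq> s\<close> to \<open>s\<close> violates this, as seen by flipping a
  deep bit of coordinate \<open>u\<close>.\<close>

lemma trivial_twist_if_SV:
  assumes SV: "SV m n h" and b: "valid_brick m b"
    and twist: "\<And>x. x \<in> brick_in b \<Longrightarrow> h x = twist_map b b' \<gamma> x"
  shows "tau \<gamma> = id"
proof -
  obtain P Q ids where P: "brick_partition m P" and ids: "length ids = length P" "set ids \<subseteq> {id}"
    and h_P: "\<And>j x. j < length P \<Longrightarrow> x \<in> brick_in (P ! j) \<Longrightarrow> h x = twist_map (P ! j) (Q ! j) (ids ! j) x"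
    using SV unfolding SV_def SV_G_def by blast
  have "inv \<gamma> s = s" for s
  proof (rule ccontr)
    define u where "u = inv \<gamma> s"
    assume "inv \<gamma> s \<noteq> s"
    then have moved: "u \<noteq> s" by (simp add: u_def)
    define x0 where "x0 = (fst b, Phi (snd b) (\<lambda>_ _. False))"
    have x0_b: "x0 \<in> brick_in b" unfolding x0_def by (rule Phi_in_brick_in)
    then have "x0 \<in> cubes m" using brick_in_subset_cubes[OF b] by blast
    then obtain j where j: "j < length P" "x0 \<in> brick_in (P ! j)"
      using brick_partition_cover[OF P] by blast
    define p where "p = length (snd b u) + length (snd (P ! j) u)"
    define x1 where "x1 = (fst x0, (snd x0)(u := (snd x0 u)(p := \<not> snd x0 u p)))"
    have flip: "x1 \<in> brick_in c" if "x0 \<in> brick_in c" "length (snd c u) \<le> p" for c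
      using that unfolding x1_def brick_in_def brick_def by (auto intro: is_prefix_fun_upd)
    have x1_b: "x1 \<in> brick_in b" and x1_P: "x1 \<in> brick_in (P ! j)"
      using flip x0_b j(2) unfolding p_def by auto
    have "ids ! j = id" using ids j(1) by (metis nth_mem singletonD subsetD)
    then have same_coordinate:
      "snd (h y) s = concat_seq (snd (Q ! j) s) (\<lambda>i. snd y s (i + length (snd (P ! j) s)))"
      if "y \<in> brick_in (P ! j)" for y
      using h_P[OF j(1) that] by (simp add: twist_map_def tau_def Phi_def Phi_inv_def)
    have moved_coordinate: "snd (h y) s = concat_seq (snd b' s) (\<lambda>i. snd y u (i + length (snd b u)))"
      if "y \<in> brick_in b" for y
      using twist[OF that] by (simp add: twist_map_def tau_def Phi_def Phi_inv_def u_def)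
    have "snd (h x1) s = snd (h x0) s"
      using same_coordinate[OF x1_P] same_coordinate[OF j(2)] moved by (simp add: x1_def)
    moreover have "snd (h x1) s (length (snd b' s) + length (snd (P ! j) u))
        \<noteq> snd (h x0) s (length (snd b' s) + length (snd (P ! j) u))"
      using moved_coordinate[OF x1_b] moved_coordinate[OF x0_b]
      by (simp add: x1_def p_def concat_seq_def add.commute)
    ultimately show False by simp
  qed
  then show ?thesis by (simp add: tau_def fun_eq_iff)
qed

lemma SV_iff_trivial_twists:
  assumes L1: "brick_list m L1" and L2: "brick_list n L2" and lengths: "length L1 = k" "length L2 = k"
    and h: "m \<ge> 1" "n \<ge> 1" "homeomorphic_map (top_of_set (cubes m)) (top_of_set (cubes n)) h"
    and twist: "\<And>i x. i < k \<Longrightarrow> x \<in> brick_in (L1 ! i) \<Longrightarrow>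
      h x = twist_map (L1 ! i) (L2 ! i) (\<gamma>s ! i) x"
  shows "SV m n h \<longleftrightarrow> (\<forall>i<k. tau (\<gamma>s ! i) = id)"
proof
  assume SV: "SV m n h"
  show "\<forall>i<k. tau (\<gamma>s ! i) = id"
  proof (intro allI impI)
    fix i assume "i < k"
    then show "tau (\<gamma>s ! i) = id"
      using trivial_twist_if_SV[OF SV brick_list.valid[OF L1 nth_mem]] twist lengths(1) by simp
  qed
next
  assume "\<forall>i<k. tau (\<gamma>s ! i) = id"
  then show "SV m n h"
    using h lengths twist by (intro SV_if_trivial_twists[OF L1 L2]) auto
qed

definition owner :: "(nat \<times> ('s \<Rightarrow> bool list)) list \<Rightarrow> nat \<times> ('s \<Rightarrow> bool list) \<Rightarrow> nat" where
  "owner P c = (SOME a. a < length P \<and> brick_in c \<subseteq> brick_in (P ! a))"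

lemma owner_eq:
  assumes P: "brick_partition m P" and a: "a < length P" "brick_in c \<subseteq> brick_in (P ! a)"
  shows "owner P c = a"
  unfolding owner_def
proof (rule some_equality)
  fix a' assume a': "a' < length P \<and> brick_in c \<subseteq> brick_in (P ! a')"
  obtain x where "x \<in> brick_in c" using brick_in_nonempty by blast
  then show "a' = a" using P a a' unfolding brick_partition_def by blast
qed (use a in simp)

lemma owner_of_long_brick:
  assumes P: "brick_partition m P" and c: "valid_brick m c"
    and long: "\<And>a s. a < length P \<Longrightarrow> length (snd (P ! a) s) \<le> length (snd c s)"
  shows "owner P c < length P" "fst c = fst (P ! owner P c)"
    "\<And>s. take (length (snd (P ! owner P c) s)) (snd c s) = snd (P ! owner P c) s"
proof -
  define x where "x = (fst c, Phi (snd c) (\<lambda>_ _. False))"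
  have x_c: "x \<in> brick_in c" unfolding x_def by (rule Phi_in_brick_in)
  then have "x \<in> cubes m" using brick_in_subset_cubes[OF c] by blast
  then obtain a where a: "a < length P" "x \<in> brick_in (P ! a)"
    using brick_partition_cover[OF P] by blast
  have fst: "fst c = fst (P ! a)" using a(2) by (simp add: x_def brick_in_def)
  have take: "take (length (snd (P ! a) s)) (snd c s) = snd (P ! a) s" for s
  proof (rule is_prefix_take_longer)
    show "is_prefix (snd (P ! a) s) (snd x s)" "is_prefix (snd c s) (snd x s)"
      using a(2) x_c unfolding brick_in_def brick_def by auto
  qed (rule long[OF a(1)])
  then have "brick_in c \<subseteq> brick_in (P ! a)"
    using brick_mono[of "snd (P ! a)" "snd c"] fst by (auto simp: brick_in_def)
  then have "owner P c = a" by (rule owner_eq[OF P a(1)])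
  then show "owner P c < length P" "fst c = fst (P ! owner P c)"
    "\<And>s. take (length (snd (P ! owner P c) s)) (snd c s) = snd (P ! owner P c) s"
    using a(1) fst take by simp_all
qed

locale piecewise_twist =
  fixes m n :: nat and P Q :: "(nat \<times> ('s \<Rightarrow> bool list)) list" and \<gamma>s :: "('s \<Rightarrow> 's) list"
    and h :: "'s cube_pt \<Rightarrow> 's cube_pt"
  assumes pos: "m \<ge> 1" "n \<ge> 1"
    and P: "brick_partition m P" and Q: "brick_partition n Q"
    and length_Q: "length Q = length P" and length_\<gamma>s: "length \<gamma>s = length P"
    and bij_\<gamma>s: "\<And>a. a < length P \<Longrightarrow> bij (\<gamma>s ! a)"
    and twist: "\<And>a x. a < length P \<Longrightarrow> x \<in> brick_in (P ! a) \<Longrightarrow> h x = twist_map (P ! a) (Q ! a) (\<gamma>s ! a) x"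
    and homeo: "homeomorphic_map (top_of_set (cubes m)) (top_of_set (cubes n)) h"
begin

definition support :: "'s set" where
  "support = (\<Union>a<length P. {s. snd (P ! a) s \<noteq> []} \<union> {s. snd (Q ! a) s \<noteq> []})"

definition depth :: nat where
  "depth = Max (insert 0 ((\<lambda>(a, s). length (snd (P ! a) s) + length (snd (Q ! a) s))
      ` ({..<length P} \<times> support)))"

definition source_level :: "'s \<Rightarrow> nat" where
  "source_level s = (if s \<in> support then depth else 0)"

definition target_support :: "'s set" where
  "target_support = support \<union> (\<Union>a<length P. (\<gamma>s ! a) ` support)"

definition target_level :: "'s \<Rightarrow> nat" where
  "target_level s = (if s \<in> target_support then 2 * depth else 0)"

text \<open>The word lengths of a sub-brick of \<open>P ! a\<close> whose twisted image has the word lengths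
  \<open>target_level\<close>. The factor \<open>2\<close> in \<open>target_level\<close> makes these lengths at least \<open>source_level\<close>.\<close>

definition pullback_level :: "nat \<Rightarrow> 's \<Rightarrow> nat" where
  "pullback_level a u =
    length (snd (P ! a) u) + target_level ((\<gamma>s ! a) u) - length (snd (Q ! a) ((\<gamma>s ! a) u))"

definition source_bricks :: "(nat \<times> ('s \<Rightarrow> bool list)) set" where
  "source_bricks = refine (level_bricks m source_level) (\<lambda>r. pullback_level (owner P r))"

definition image_brick :: "nat \<times> ('s \<Rightarrow> bool list) \<Rightarrow> nat \<times> ('s \<Rightarrow> bool list)" where
  "image_brick c =
    (fst (Q ! owner P c), twist_word (P ! owner P c) (Q ! owner P c) (\<gamma>s ! owner P c) (snd c))"

lemma valid_P: "a < length P \<Longrightarrow> valid_brick m (P ! a)"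
  using P unfolding brick_partition_def by simp

lemma valid_Q: "a < length P \<Longrightarrow> valid_brick n (Q ! a)"
  using Q length_Q unfolding brick_partition_def by simp

lemma finite_support: "finite support"
  unfolding support_def using valid_P valid_Q by (auto simp: valid_brick_def fin_supp_def)

lemma finite_target_support: "finite target_support"
  unfolding target_support_def using finite_support by auto

lemma finite_source_level: "finite {s. source_level s \<noteq> 0}"
  using finite_support by (rule finite_subset[rotated]) (auto simp: source_level_def)

lemma finite_target_level: "finite {s. target_level s \<noteq> 0}"
  using finite_target_support by (rule finite_subset[rotated]) (auto simp: target_level_def)

lemma empty_outside_support: "a < length P \<Longrightarrow> s \<notin> support \<Longrightarrow> snd (P ! a) s = [] \<and> snd (Q ! a) s = []"
  unfolding support_def by auto

lemma lengths_le_depth: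
  assumes "a < length P"
  shows "length (snd (P ! a) s) + length (snd (Q ! a) s) \<le> depth"
proof (cases "s \<in> support")
  case True
  then show ?thesis
    unfolding depth_def using assms finite_support by (intro Max_ge) (auto intro!: imageI)
next
  case False
  then show ?thesis using empty_outside_support[OF assms] by simp
qed

lemma owner_level_brick:
  assumes "r \<in> level_bricks m source_level"
  shows "owner P r < length P" "fst r = fst (P ! owner P r)"
    "\<And>s. take (length (snd (P ! owner P r) s)) (snd r s) = snd (P ! owner P r) s"
proof -
  have "valid_brick m r" using level_bricks(3)[OF finite_source_level] assms by blast
  moreover have "length (snd (P ! a) s) \<le> length (snd r s)" if "a < length P" for a s
    using assms lengths_le_depth[OF that, of s] empty_outside_support[OF that, of s]
    by (auto simp: level_bricks_def source_level_def)
  ultimately show "owner P r < length P" "fst r = fst (P ! owner P r)"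
    "\<And>s. take (length (snd (P ! owner P r) s)) (snd r s) = snd (P ! owner P r) s"
    using owner_of_long_brick[OF P] by blast+
qed

lemma refinement_source:
  "refinement m (level_bricks m source_level) (support \<union> (\<Union>a<length P. inv (\<gamma>s ! a) ` target_support))
    (\<lambda>r. pullback_level (owner P r))"
proof
  show "finite (level_bricks m source_level)" "\<And>b. b \<in> level_bricks m source_level \<Longrightarrow> valid_brick m b"
    using level_bricks[OF finite_source_level] by blast+
  show "finite (support \<union> (\<Union>a<length P. inv (\<gamma>s ! a) ` target_support))"
    using finite_support finite_target_support by simp
next
  fix r s assume r: "r \<in> level_bricks m source_level"
  define a where "a = owner P r"
  have a: "a < length P" unfolding a_def by (rule owner_level_brick[OF r])
  have length_r: "length (snd r s) = source_level s" using r by (auto simp: level_bricks_def)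
  show "length (snd r s) \<le> pullback_level (owner P r) s"
  proof (cases "s \<in> support")
    case True
    then have "target_level ((\<gamma>s ! a) s) = 2 * depth"
      using a unfolding target_level_def target_support_def by auto
    then show ?thesis
      using length_r True lengths_le_depth[OF a, of "(\<gamma>s ! a) s"]
      unfolding pullback_level_def a_def[symmetric] source_level_def by simp
  qed (simp add: length_r source_level_def)
  assume "s \<notin> support \<union> (\<Union>a<length P. inv (\<gamma>s ! a) ` target_support)"
  moreover have "s = inv (\<gamma>s ! a) ((\<gamma>s ! a) s)"
    using bij_\<gamma>s[OF a] by (simp add: bij_is_inj)
  ultimately have "s \<notin> support" "(\<gamma>s ! a) s \<notin> target_support"
    using a by blast+
  then show "pullback_level (owner P r) s = length (snd r s)"
    using empty_outside_support[OF a] length_r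
    unfolding pullback_level_def a_def[symmetric] source_level_def target_level_def by simp
qed

lemma source_bricks:
  shows "dyadic_partition m (brick_in ` source_bricks)" and "finite source_bricks"
    and "\<And>c. c \<in> source_bricks \<Longrightarrow> valid_brick m c"
proof -
  interpret refinement m "level_bricks m source_level"
    "support \<union> (\<Union>a<length P. inv (\<gamma>s ! a) ` target_support)"
    "\<lambda>r. pullback_level (owner P r)"
    by (rule refinement_source)
  show "dyadic_partition m (brick_in ` source_bricks)"
    unfolding source_bricks_def
    by (intro dyadic_partition_refine[OF refinement_source] level_bricks finite_source_level)
  show "finite source_bricks" "\<And>c. c \<in> source_bricks \<Longrightarrow> valid_brick m c"
    unfolding source_bricks_def by (simp_all add: finite_refine valid_refine)
qed

lemma owner_source_brick:
  assumes c: "c \<in> source_bricks"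
  shows "owner P c < length P" "brick_in c \<subseteq> brick_in (P ! owner P c)"
    "\<And>u. take (length (snd (P ! owner P c) u)) (snd c u) = snd (P ! owner P c) u"
    "\<And>u. length (snd c u) = pullback_level (owner P c) u"
proof -
  obtain r where r: "r \<in> level_bricks m source_level"
    and c_r: "c \<in> sub_bricks r (pullback_level (owner P r))"
    using c unfolding source_bricks_def refine_def by blast
  define a where "a = owner P r"
  have a: "a < length P" and r_a: "\<And>s. take (length (snd (P ! a) s)) (snd r s) = snd (P ! a) s"
    using owner_level_brick[OF r] unfolding a_def by auto
  have "brick_in r \<subseteq> brick_in (P ! a)"
    using brick_mono[of "snd (P ! a)" "snd r"] r_a owner_level_brick(2)[OF r]
    by (auto simp: brick_in_def a_def)
  then have c_a: "brick_in c \<subseteq> brick_in (P ! a)"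
    using brick_in_sub_bricks_subset[OF c_r] by blast
  then have owner: "owner P c = a" by (rule owner_eq[OF P a])
  obtain \<sigma> where \<sigma>: "c = (fst r, \<sigma>)" "\<And>s. length (\<sigma> s) = pullback_level a s"
    "\<And>s. take (length (snd r s)) (\<sigma> s) = snd r s"
    using c_r unfolding a_def by (auto elim!: sub_bricksE)
  have "take (length (snd (P ! a) u)) (snd c u) = snd (P ! a) u" for u
  proof -
    have "length (take (length (snd (P ! a) u)) (snd r u)) = length (snd (P ! a) u)"
      using r_a by simp
    then have "length (snd (P ! a) u) \<le> length (snd r u)"
      by (simp add: min_def split: if_splits)
    then have "take (length (snd (P ! a) u)) (\<sigma> u)
        = take (length (snd (P ! a) u)) (take (length (snd r u)) (\<sigma> u))"
      by (simp add: min_absorb1)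
    also have "\<dots> = snd (P ! a) u" using \<sigma>(3) r_a by simp
    finally show ?thesis using \<sigma>(1) by simp
  qed
  moreover have "length (snd c u) = pullback_level a u" for u
    using \<sigma>(1,2) by simp
  ultimately show "owner P c < length P" "brick_in c \<subseteq> brick_in (P ! owner P c)"
    "\<And>u. take (length (snd (P ! owner P c) u)) (snd c u) = snd (P ! owner P c) u"
    "\<And>u. length (snd c u) = pullback_level (owner P c) u"
    using a c_a by (simp_all add: owner)
qed

lemma image_brick_in_target:
  assumes c: "c \<in> source_bricks"
  shows "image_brick c \<in> level_bricks n target_level"
proof -
  define a where "a = owner P c"
  have a: "a < length P" and length_c: "\<And>u. length (snd c u) = pullback_level a u"
    using owner_source_brick[OF c] unfolding a_def by auto
  have "length (twist_word (P ! a) (Q ! a) (\<gamma>s ! a) (snd c) s) = target_level s" for s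
  proof -
    have "(\<gamma>s ! a) (inv (\<gamma>s ! a) s) = s"
      using bij_\<gamma>s[OF a] by (simp add: bij_is_surj surj_f_inv_f)
    moreover have "length (snd (Q ! a) s) \<le> target_level s"
      using lengths_le_depth[OF a, of s] empty_outside_support[OF a, of s]
      by (auto simp: target_level_def target_support_def)
    ultimately show ?thesis
      using length_c[of "inv (\<gamma>s ! a) s"] by (simp add: twist_word_def pullback_level_def)
  qed
  moreover have "fst (Q ! a) < n" using valid_Q[OF a] by (simp add: valid_brick_def)
  ultimately show ?thesis
    by (simp add: level_bricks_def image_brick_def a_def)
qed

lemma twist_on_source_brick:
  assumes c: "c \<in> source_bricks" and x: "x \<in> brick_in c"
  shows "h x = twist_map c (image_brick c) (\<gamma>s ! owner P c) x"
proof -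
  define a where "a = owner P c"
  have a: "a < length P" "brick_in c \<subseteq> brick_in (P ! a)"
    and sub: "\<And>u. take (length (snd (P ! a) u)) (snd c u) = snd (P ! a) u"
    using owner_source_brick[OF c] unfolding a_def by auto
  obtain j \<kappa> where "x = (j, \<kappa>)" "\<kappa> \<in> brick (snd c)" "j = fst c"
    using x by (auto simp: brick_in_def)
  then show ?thesis
    using twist[OF a(1)] a(2) x twist_map_sub_brick[OF sub, of \<kappa> "Q ! a" "\<gamma>s ! a" j]
    by (auto simp: image_brick_def a_def)
qed

lemma image_source_brick:
  assumes c: "c \<in> source_bricks"
  shows "h ` brick_in c = brick_in (image_brick c)"
proof -
  define a where "a = owner P c"
  have a: "a < length P" "brick_in c \<subseteq> brick_in (P ! a)"
    and sub: "\<And>u. take (length (snd (P ! a) u)) (snd c u) = snd (P ! a) u"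
    using owner_source_brick[OF c] unfolding a_def by auto
  have "h ` brick_in c = twist_map (P ! a) (Q ! a) (\<gamma>s ! a) ` brick_in (fst c, snd c)"
    using twist[OF a(1)] a(2) by (intro image_cong) auto
  also have "\<dots> = brick_in (image_brick c)"
    using twist_map_image[OF bij_\<gamma>s[OF a(1)] sub, of "Q ! a" "fst c"]
      by (simp add: image_brick_def a_def)
  finally show ?thesis .
qed

lemma bij_betw_image_brick: "bij_betw image_brick source_bricks (level_bricks n target_level)"
proof -
  have h_inj: "inj_on h (cubes m)" and h_surj: "h ` cubes m = cubes n"
    using homeomorphic_imp_injective_map[OF homeo] homeomorphic_imp_surjective_map[OF homeo] by simp_all
  have "inj_on image_brick source_bricks"
  proof
    fix c c' assume c: "c \<in> source_bricks" "c' \<in> source_bricks" "image_brick c = image_brick c'"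
    then have "h ` brick_in c = h ` brick_in c'" using image_source_brick by simp
    moreover have "brick_in c \<subseteq> cubes m" "brick_in c' \<subseteq> cubes m"
      using c(1,2) source_bricks(3) brick_in_subset_cubes by blast+
    ultimately show "c = c'"
      using inj_on_image_eq_iff[OF h_inj] brick_in_inj by metis
  qed
  moreover have "level_bricks n target_level \<subseteq> image_brick ` source_bricks"
  proof
    fix u assume u: "u \<in> level_bricks n target_level"
    define y where "y = (fst u, Phi (snd u) (\<lambda>_ _. False))"
    have y_u: "y \<in> brick_in u" unfolding y_def by (rule Phi_in_brick_in)
    then have "y \<in> cubes n"
      using brick_in_subset_cubes level_bricks(3)[OF finite_target_level u] by blast
    then obtain x where x: "x \<in> cubes m" "h x = y" using h_surj by force
    have "x \<in> \<Union> (brick_in ` source_bricks)"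
      using brick_set_partition_if_dyadic[OF source_bricks(1)] x(1)
        by (simp add: brick_set_partition_def)
    then obtain c where c: "c \<in> source_bricks" "x \<in> brick_in c" by blast
    have "y \<in> brick_in (image_brick c)" using image_source_brick[OF c(1)] c(2) x(2) by blast
    then have "brick_in u = brick_in (image_brick c)"
      using brick_set_partition_if_dyadic[OF level_bricks(1)[OF finite_target_level]]
        u y_u image_brick_in_target[OF c(1)]
      unfolding brick_set_partition_def by (meson disjoint_iff imageI)
    then show "u \<in> image_brick ` source_bricks" using c(1) brick_in_inj by blast
  qed
  ultimately show ?thesis
    using image_brick_in_target by (auto simp: bij_betw_def)
qed

lemma forest_factorization:
  assumes "set \<gamma>s \<subseteq> G"
  shows "\<exists>k f1 f2 t. multicolored_forest m k f1 \<and> multicolored_forest n k f2 \<and> G_twist G k t \<and>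
    (\<forall>x\<in>cubes m. h x = inv_into (cubes n) f2 (t (f1 x)))"
proof -
  obtain L1 where L1: "set L1 = source_bricks" "distinct L1"
    using finite_distinct_list[OF source_bricks(2)] by blast
  define L2 where "L2 = map image_brick L1"
  have set_L2: "set L2 = level_bricks n target_level" and "distinct L2"
    using bij_betw_image_brick L1 unfolding L2_def
    by (auto simp: bij_betw_def distinct_map)
  have bricks_L1: "brick_list m L1"
    using L1 source_bricks brick_set_partition_if_dyadic by unfold_locales auto
  have bricks_L2: "brick_list n L2"
    using set_L2 \<open>distinct L2\<close> level_bricks(3)[OF finite_target_level]
      brick_set_partition_if_dyadic[OF level_bricks(1)[OF finite_target_level]]
    by unfold_locales auto
  have dyadic_L1: "dyadic_partition m (brick_in ` set L1)"
    and dyadic_L2: "dyadic_partition n (brick_in ` set L2)"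
    using L1(1) set_L2 source_bricks(1) level_bricks(1)[OF finite_target_level] by simp_all
  have "(0, \<lambda>_ _. False) \<in> cubes m" using pos by (simp add: cubes_def)
  then have "source_bricks \<noteq> {}"
    using brick_set_partition_if_dyadic[OF source_bricks(1)] unfolding brick_set_partition_def by auto
  then have nonempty: "length L1 \<ge> 1" using L1(1) by (cases L1) auto
  define \<delta>s where "\<delta>s = map (\<lambda>c. \<gamma>s ! owner P c) L1"
  have \<delta>s_G: "set \<delta>s \<subseteq> G"
    using assms owner_source_brick(1) length_\<gamma>s L1(1) unfolding \<delta>s_def
    by (auto intro!: nth_mem[THEN subsetD[OF assms]])
  have twist_L1: "h x = twist_map (L1 ! i) (L2 ! i) (\<delta>s ! i) x"
    if "i < length L1" "x \<in> brick_in (L1 ! i)" for i x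
    using twist_on_source_brick[of "L1 ! i" x] that nth_mem[OF that(1)] L1(1)
    by (simp add: L2_def \<delta>s_def)
  have "length L2 = length L1" "length \<delta>s = length L1"
    by (simp_all add: L2_def \<delta>s_def)
  then have "\<exists>f1 f2 t. multicolored_forest m (length L1) f1 \<and> multicolored_forest n (length L1) f2 \<and>
      G_twist G (length L1) t \<and> (\<forall>x\<in>cubes m. h x = inv_into (cubes n) f2 (t (f1 x)))"
    using forest_factorization_if_piecewise_twist[OF bricks_L1 dyadic_L1 bricks_L2 dyadic_L2 _ _
        nonempty pos \<delta>s_G twist_L1]
    by blast
  then show ?thesis by blast
qed

end

lemma forest_factorization_if_SV_G:
  assumes "perm_subgroup G" and "SV_G G m n h"
  shows "\<exists>k f1 f2 t. multicolored_forest m k f1 \<and> multicolored_forest n k f2 \<and> G_twist G k t \<and>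
    (\<forall>x\<in>cubes m. h x = inv_into (cubes n) f2 (t (f1 x)))"
proof -
  obtain P Q \<gamma>s where "m \<ge> 1" "n \<ge> 1" "brick_partition m P" "brick_partition n Q"
    "length Q = length P" "length \<gamma>s = length P" and \<gamma>s: "set \<gamma>s \<subseteq> G"
    and "\<forall>a<length P. \<forall>x\<in>brick_in (P ! a). h x = twist_map (P ! a) (Q ! a) (\<gamma>s ! a) x"
    and "homeomorphic_map (top_of_set (cubes m)) (top_of_set (cubes n)) h"
    using assms(2) unfolding SV_G_def by blast
  moreover have "bij (\<gamma>s ! a)" if "a < length \<gamma>s" for a
    using assms(1) \<gamma>s nth_mem[OF that] unfolding perm_subgroup_def by blast
  ultimately have "piecewise_twist m n P Q \<gamma>s h"
    by unfold_locales auto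
  then show ?thesis
    using \<gamma>s by (rule piecewise_twist.forest_factorization)
qed

theorem lemma2p2:
  fixes G :: "('s \<Rightarrow> 's) set" and h :: "'s cube_pt \<Rightarrow> 's cube_pt" and m n :: nat
  assumes "perm_subgroup G"
    and "SV_G G m n h"
  shows "(\<exists>k f1 f2 t. multicolored_forest m k f1 \<and> multicolored_forest n k f2 \<and> G_twist G k t \<and>
            (\<forall>x\<in>cubes m. h x = inv_into (cubes n) f2 (t (f1 x))))
       \<and> (\<forall>k f1 f2 t. multicolored_forest m k f1 \<and> multicolored_forest n k f2 \<and> G_twist G k t \<and>
            (\<forall>x\<in>cubes m. h x = inv_into (cubes n) f2 (t (f1 x)))
            \<longrightarrow> (SV m n h \<longleftrightarrow> (\<forall>x\<in>cubes k. t x = x)))"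
proof (intro conjI allI impI)
  show "\<exists>k f1 f2 t. multicolored_forest m k f1 \<and> multicolored_forest n k f2 \<and> G_twist G k t \<and>
      (\<forall>x\<in>cubes m. h x = inv_into (cubes n) f2 (t (f1 x)))"
    using assms by (rule forest_factorization_if_SV_G)
next
  fix k f1 f2 t
  assume "multicolored_forest m k f1 \<and> multicolored_forest n k f2 \<and> G_twist G k t \<and>
      (\<forall>x\<in>cubes m. h x = inv_into (cubes n) f2 (t (f1 x)))"
  then obtain \<gamma>s where f: "multicolored_forest m k f1" "multicolored_forest n k f2"
    and t: "length \<gamma>s = k" "\<And>x. x \<in> cubes k \<Longrightarrow> t x = twist_cubes \<gamma>s x"
    and h: "\<And>x. x \<in> cubes m \<Longrightarrow> h x = inv_into (cubes n) f2 (t (f1 x))"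
    by (auto simp: G_twist_iff)
  obtain L1 L2 where L: "brick_list m L1" "brick_list n L2" "length L1 = k" "length L2 = k"
    and twist: "\<And>i x. i < k \<Longrightarrow> x \<in> brick_in (L1 ! i) \<Longrightarrow>
      h x = twist_map (L1 ! i) (L2 ! i) (\<gamma>s ! i) x"
    using piecewise_twist_if_forest_factorization[OF f t h] by blast
  have "SV m n h \<longleftrightarrow> (\<forall>i<k. tau (\<gamma>s ! i) = id)"
    using assms(2) unfolding SV_G_def by (intro SV_iff_trivial_twists[OF L _ _ _ twist]) auto
  also have "\<dots> \<longleftrightarrow> (\<forall>x\<in>cubes k. t x = x)"
    using twist_cubes_trivial_iff[of \<gamma>s] t by simp
  finally show "SV m n h \<longleftrightarrow> (\<forall>x\<in>cubes k. t x = x)" .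
qed

end
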